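(* Let $\mathcal{K}\subset\mathbb{R}^l$ be a closed convex cone with non-empty interior, with dual cone $\mathcal{K}^*=\{y\mid y^\top x\ge 0\ \forall x\in\mathcal{K}\}$, and write $a\preceq_{\mathcal{K}} b$ for $b-a\in\mathcal{K}$. Let $G,G^i\in\mathbb{R}^{l\times n}$ and $g,g^i\in\mathbb{R}^l$ be such that the sets $\{y\in\mathbb{R}^n\mid Gy\preceq_{\mathcal{K}} g\}$ and $\{y\in\mathbb{R}^n\mid G^iy\preceq_{\mathcal{K}} g^i\}$ are non-empty, convex and compact. Let $R,R^i\in\mathbb{R}^{n\times n}$ be rotation matrices and $p,p^i\in\mathbb{R}^n$ positions, and define $$\mathbb{S}=\{z\in\mathbb{R}^n\mid \exists y\in\mathbb{R}^n:\ Gy\preceq_{\mathcal{K}} g,\ z=Ry+p\},\qquad \mathbb{S}^i=\{z\in\mathbb{R}^n\mid \exists y\in\mathbb{R}^n:\ G^iy\preceq_{\mathcal{K}} g^i,\ z=R^iy+p^i\},$$ and $\mathrm{dist}(\mathbb{S},\mathbb{S}^i)=\min_{z_1\in\mathbb{S},\,z_2\in\mathbb{S}^i}\|z_1-z_2\|_2$. Then $\mathrm{dist}(\mathbb{S},\mathbb{S}^i)>0$ if and only if there exist $\lambda,\nu\in\mathcal{K}^*$ such that $$-\lambda^\top\big(GR^\top(p-p^i)+g\big)-\nu^\top g^i>0,\qquad \|\lambda^\top G R^\top\|_2\le 1,\qquad \lambda^\top GR^\top=-\nu^\top G^iR^{i\top}.$$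
   Context: In the paper, $\mathbb{S}$ is the region occupied by the controlled agent and $\mathbb{S}^i$ the region occupied by the $i$-th obstacle at a given prediction time step, with positions $p=Cx+c$ and $p^i=Co^i$ obtained from the states; here the positions are treated as given vectors. *)

theory Defs
  imports "HOL-Analysis.Analysis"
begin

definition dual_cone :: "(real^'l) set \<Rightarrow> (real^'l) set" where
  "dual_cone K = {y. \<forall>x\<in>K. y \<bullet> x \<ge> 0}"

definition cone_le :: "(real^'l) set \<Rightarrow> real^'l \<Rightarrow> real^'l \<Rightarrow> bool" where
  "cone_le K a b \<longleftrightarrow> b - a \<in> K"

definition conic_set :: "(real^'l) set \<Rightarrow> real^'n^'l \<Rightarrow> real^'l \<Rightarrow> (real^'n) set" where
  "conic_set K G g = {y. cone_le K (G *v y) g}"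

definition body_region :: "(real^'l) set \<Rightarrow> real^'n^'l \<Rightarrow> real^'l \<Rightarrow> real^'n^'n \<Rightarrow> real^'n \<Rightarrow> (real^'n) set" where
  "body_region K G g R p = {z. \<exists>y. cone_le K (G *v y) g \<and> z = R *v y + p}"

end

theory Submission
  imports Defs
begin

(* Writing M = G R^T, a rotated and translated conic set is again a conic set
   {z. (g + M p) - M z : K}, so by compactness dist(S, S^i) > 0 says that the stacked conic
   system with cone K x K has no solution. Since S is bounded, -M v : K forces v = 0; this makes
   range M + K x K closed, and separating the right-hand side from that closed convex cone
   yields lambda, nu in K* with lambda M + nu M^i = 0 and lambda c + nu c^i < 0 (a conic Farkas
   lemma). Conversely such a certificate excludes a common point. Scaling normalises
   |lambda M| <= 1, and lambda M = -nu M^i turns lambda c + nu c^i into the stated objective. *)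

lemma linear_plus_cone_lower_bound:
  fixes L :: "'a::euclidean_space \<Rightarrow> 'b::euclidean_space"
  assumes "closed Q" "cone Q" "Q \<noteq> {}" "linear L" and rec: "\<And>d. - L d \<in> Q \<Longrightarrow> d = 0"
  obtains \<delta> where "\<delta> > 0" "\<And>z w. w \<in> Q \<Longrightarrow> \<delta> * norm z \<le> norm (L z + w)"
proof -
  have "continuous_on (sphere 0 1) (\<lambda>d. infdist (- L d) Q)"
    using \<open>linear L\<close> by (intro continuous_intros linear_continuous_on) (auto simp: linear_conv_bounded_linear)
  moreover have "sphere (0::'a) 1 \<noteq> {}"
    by simp
  ultimately obtain d0 where d0: "d0 \<in> sphere 0 1"
    and min: "\<And>d. d \<in> sphere 0 1 \<Longrightarrow> infdist (- L d0) Q \<le> infdist (- L d) Q"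
    using continuous_attains_inf[OF compact_sphere] by metis
  define \<delta> where "\<delta> = infdist (- L d0) Q"
  have "\<delta> > 0"
    unfolding \<delta>_def using d0 rec infdist_pos_not_in_closed[OF \<open>closed Q\<close> \<open>Q \<noteq> {}\<close>] by force
  moreover have "\<delta> * norm z \<le> norm (L z + w)" if "w \<in> Q" for z w
  proof (cases "z = 0")
    case False
    define t where "t = norm z"
    have "t > 0"
      using False by (simp add: t_def)
    have "\<delta> \<le> infdist (- L (z /\<^sub>R t)) Q"
      using min[of "z /\<^sub>R t"] \<open>t > 0\<close> by (simp add: t_def \<delta>_def)
    also have "\<dots> \<le> dist (- L (z /\<^sub>R t)) (w /\<^sub>R t)"
      using \<open>cone Q\<close> \<open>w \<in> Q\<close> \<open>t > 0\<close> by (intro infdist_le) (simp add: cone_def)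
    also have "\<dots> = norm (- ((L z + w) /\<^sub>R t))"
      by (simp add: dist_norm linear_scale[OF \<open>linear L\<close>] scaleR_add_right)
    also have "\<dots> = norm (L z + w) / t"
      using \<open>t > 0\<close> by (simp add: divide_inverse_commute)
    finally show ?thesis
      using \<open>t > 0\<close> by (simp add: t_def pos_le_divide_eq)
  qed simp
  ultimately show thesis
    using that by blast
qed

lemma closed_linear_range_plus_cone:
  fixes L :: "'a::euclidean_space \<Rightarrow> 'b::euclidean_space"
  assumes "closed Q" "cone Q" "linear L" "\<And>d. - L d \<in> Q \<Longrightarrow> d = 0"
  shows "closed (\<Union>x\<in>range L. \<Union>w\<in>Q. {x + w})" (is "closed ?D")
proof (cases "Q = {}")
  case False
  then obtain \<delta> where "\<delta> > 0" and \<delta>: "\<And>z w. w \<in> Q \<Longrightarrow> \<delta> * norm z \<le> norm (L z + w)"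
    using linear_plus_cone_lower_bound assms by metis
  have "y \<in> ?D" if "y \<in> closure ?D" for y
  proof -
    define r where "r = (norm y + 1) / \<delta>"
    let ?Dr = "\<Union>x\<in>L ` cball 0 r. \<Union>w\<in>Q. {x + w}"
    have "closed ?Dr"
      using \<open>linear L\<close> \<open>closed Q\<close>
      by (intro compact_closed_sums compact_continuous_image compact_cball linear_continuous_on)
        (auto simp: linear_conv_bounded_linear)
    moreover have "y \<in> closure ?Dr"
      unfolding closure_approachable
    proof (intro allI impI)
      fix e :: real
      assume "e > 0"
      then obtain x where "x \<in> ?D" "dist x y < min e 1"
        using \<open>y \<in> closure ?D\<close> unfolding closure_approachable by (meson min_less_iff_conj zero_less_one)
      then obtain z w where "w \<in> Q" and close: "dist (L z + w) y < min e 1"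
        by blast
      then have "\<delta> * norm z \<le> norm y + 1"
        using \<delta>[of w z] norm_triangle_ineq2[of "L z + w" y] by (simp add: dist_norm)
      then have "z \<in> cball 0 r"
        using \<open>\<delta> > 0\<close> by (simp add: r_def pos_le_divide_eq mult.commute)
      then have "L z + w \<in> ?Dr"
        using \<open>w \<in> Q\<close> by blast
      with close show "\<exists>x\<in>?Dr. dist x y < e"
        by (meson min_less_iff_conj)
    qed
    moreover have "?Dr \<subseteq> ?D"
      by blast
    ultimately show "y \<in> ?D"
      using closure_closed by auto
  qed
  then show ?thesis
    using closure_subset_eq by blast
qed simp

(* Without the recession hypothesis range L + Q need not be closed, and an infeasible
   system may admit no certificate. *)
lemma conic_farkas:
  fixes L :: "'a::euclidean_space \<Rightarrow> 'b::euclidean_space"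
  assumes "closed Q" "convex Q" "cone Q" "Q \<noteq> {}" "linear L"
    and "\<And>d. - L d \<in> Q \<Longrightarrow> d = 0" and infeasible: "\<And>z. c - L z \<notin> Q"
  obtains y where "\<And>q. q \<in> Q \<Longrightarrow> 0 \<le> y \<bullet> q" "\<And>z. y \<bullet> L z = 0" "y \<bullet> c < 0"
proof -
  let ?D = "\<Union>x\<in>range L. \<Union>w\<in>Q. {x + w}"
  have "convex ?D"
    using assms by (intro convex_sums convex_linear_image) auto
  moreover have "closed ?D"
    using assms by (intro closed_linear_range_plus_cone)
  moreover have "c \<notin> ?D"
  proof
    assume "c \<in> ?D"
    then obtain z w where "w \<in> Q" "c = L z + w"
      by blast
    then show False
      using infeasible[of z] by simp
  qed
  ultimately obtain a b where "a \<bullet> c < b" and "\<forall>x\<in>?D. b < a \<bullet> x"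
    using separating_hyperplane_closed_point[of ?D c] by auto
  then have sep: "b < a \<bullet> (L z + w)" if "w \<in> Q" for z w
    using that by blast
  have "0 \<in> Q"
    using \<open>cone Q\<close> \<open>Q \<noteq> {}\<close> cone_contains_0 by blast
  have ray: "0 \<le> r" if "\<And>t. 0 \<le> t \<Longrightarrow> b < t * r" for r :: real
  proof (rule ccontr)
    assume "\<not> 0 \<le> r"
    then have t: "0 \<le> \<bar>b\<bar> / - r" "\<bar>b\<bar> / - r * r = - \<bar>b\<bar>"
      by (simp_all add: divide_nonneg_neg)
    show False
      using that[OF t(1)] t(2) by linarith
  qed
  have "0 \<le> a \<bullet> q" if "q \<in> Q" for q
  proof (rule ray)
    fix t :: real
    assume "0 \<le> t"
    then have "t *\<^sub>R q \<in> Q"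
      using \<open>cone Q\<close> \<open>q \<in> Q\<close> by (simp add: cone_def)
    from sep[OF this, of 0] show "b < t * (a \<bullet> q)"
      by (simp add: linear_0[OF \<open>linear L\<close>])
  qed
  moreover have "a \<bullet> L z = 0" for z
  proof -
    have "0 \<le> a \<bullet> L (s *\<^sub>R z)" for s
    proof (rule ray)
      fix t :: real
      show "b < t * (a \<bullet> L (s *\<^sub>R z))"
        using sep[OF \<open>0 \<in> Q\<close>, of "t *\<^sub>R s *\<^sub>R z"] by (simp add: linear_scale[OF \<open>linear L\<close>])
    qed
    from this[of 1] this[of "-1"] show ?thesis
      by (simp add: linear_neg[OF \<open>linear L\<close>])
  qed
  moreover have "a \<bullet> c < 0"
    using \<open>a \<bullet> c < b\<close> sep[OF \<open>0 \<in> Q\<close>, of 0] by (simp add: linear_0[OF \<open>linear L\<close>])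
  ultimately show thesis
    using that by blast
qed

lemma cone_dual_cone: "cone (dual_cone K)"
  by (auto simp: cone_def dual_cone_def)

lemma conic_set_recession_trivial:
  assumes "convex K" "cone K" "bounded (conic_set K G g)" "y0 \<in> conic_set K G g"
    and "- (G *v v) \<in> K"
  shows "v = 0"
proof (rule ccontr)
  assume "v \<noteq> 0"
  obtain B where B: "\<And>y. y \<in> conic_set K G g \<Longrightarrow> norm y \<le> B"
    using assms(3) bounded_iff by blast
  define t where "t = (B + norm y0 + 1) / norm v"
  have "0 \<le> B"
    using order_trans[OF norm_ge_zero B[OF assms(4)]] .
  then have "t \<ge> 0"
    by (simp add: t_def)
  have "g - G *v (y0 + t *\<^sub>R v) = (g - G *v y0) + t *\<^sub>R (- (G *v v))"
    by (simp add: matrix_vector_right_distrib matrix_vector_mult_scaleR algebra_simps)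
  also have "\<dots> \<in> K"
  proof -
    have "\<forall>x\<in>K. \<forall>y\<in>K. x + y \<in> K"
      using assms(1,2) convex_cone[of K] by blast
    moreover have "g - G *v y0 \<in> K"
      using assms(4) by (simp add: conic_set_def cone_le_def)
    moreover have "t *\<^sub>R (- (G *v v)) \<in> K"
      using assms(2,5) \<open>t \<ge> 0\<close> unfolding cone_def by blast
    ultimately show ?thesis
      by blast
  qed
  finally have "norm (y0 + t *\<^sub>R v) \<le> B"
    by (intro B) (simp add: conic_set_def cone_le_def)
  moreover have "norm (t *\<^sub>R v) = B + norm y0 + 1"
    using \<open>0 \<le> B\<close> \<open>v \<noteq> 0\<close> by (simp add: t_def)
  ultimately show False
    using norm_triangle_ineq4[of "y0 + t *\<^sub>R v" y0] by simp
qed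

lemma certificate_imp_conic_sets_disjoint:
  assumes "lam \<in> dual_cone K1" "nu \<in> dual_cone K2"
    and kernel: "lam v* M1 + nu v* M2 = 0" and neg: "lam \<bullet> c1 + nu \<bullet> c2 < 0"
  shows "conic_set K1 M1 c1 \<inter> conic_set K2 M2 c2 = {}"
proof (rule ccontr)
  assume "conic_set K1 M1 c1 \<inter> conic_set K2 M2 c2 \<noteq> {}"
  then obtain z where "c1 - M1 *v z \<in> K1" "c2 - M2 *v z \<in> K2"
    by (auto simp: conic_set_def cone_le_def)
  then have "0 \<le> lam \<bullet> (c1 - M1 *v z) + nu \<bullet> (c2 - M2 *v z)"
    using assms(1,2) by (simp add: dual_cone_def)
  also have "\<dots> = lam \<bullet> c1 + nu \<bullet> c2 - (lam v* M1 + nu v* M2) \<bullet> z"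
    by (simp add: inner_diff_right inner_add_left dot_lmul_matrix)
  finally show False
    using kernel neg by simp
qed

lemma conic_sets_disjoint_imp_certificate:
  fixes K1 :: "(real^'l) set" and K2 :: "(real^'m) set"
    and M1 :: "real^'n^'l" and M2 :: "real^'n^'m"
  assumes "closed K1" "convex K1" "cone K1" "K1 \<noteq> {}"
    and "closed K2" "convex K2" "cone K2" "K2 \<noteq> {}"
    and "bounded (conic_set K1 M1 c1)" "conic_set K1 M1 c1 \<noteq> {}"
    and disjoint: "conic_set K1 M1 c1 \<inter> conic_set K2 M2 c2 = {}"
  obtains lam nu where "lam \<in> dual_cone K1" "nu \<in> dual_cone K2"
    "lam v* M1 + nu v* M2 = 0" "lam \<bullet> c1 + nu \<bullet> c2 < 0"
proof -
  define L where "L z = (M1 *v z, M2 *v z)" for z :: "real^'n"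
  have "linear L"
    by (auto simp: linear_iff L_def matrix_vector_right_distrib matrix_vector_mult_scaleR)
  have recession: "d = 0" if "- L d \<in> K1 \<times> K2" for d
  proof -
    obtain y0 where "y0 \<in> conic_set K1 M1 c1"
      using assms(10) by blast
    moreover have "- (M1 *v d) \<in> K1"
      using that by (simp add: L_def)
    ultimately show "d = 0"
      by (rule conic_set_recession_trivial[OF assms(2,3,9)])
  qed
  have infeasible: "(c1, c2) - L z \<notin> K1 \<times> K2" for z
    using disjoint by (auto simp: L_def conic_set_def cone_le_def)
  have "cone (K1 \<times> K2)"
    using assms(3,7) by (auto simp: cone_def)
  moreover have "K1 \<times> K2 \<noteq> {}"
    using assms(4,8) by simp
  ultimately obtain y where dual: "\<And>q. q \<in> K1 \<times> K2 \<Longrightarrow> 0 \<le> y \<bullet> q"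
    and kernel: "\<And>z. y \<bullet> L z = 0" and neg: "y \<bullet> (c1, c2) < 0"
    using conic_farkas[OF closed_Times[OF assms(1,5)] convex_Times[OF assms(2,6)] _ _
          \<open>linear L\<close> recession infeasible] by blast
  obtain lam nu where y: "y = (lam, nu)"
    by (cases y)
  have "0 \<in> K1" "0 \<in> K2"
    using assms(3,4,7,8) cone_contains_0 by blast+
  have "0 \<le> lam \<bullet> k" if "k \<in> K1" for k
    using dual[of "(k, 0)"] that \<open>0 \<in> K2\<close> by (simp add: y)
  moreover have "0 \<le> nu \<bullet> k" if "k \<in> K2" for k
    using dual[of "(0, k)"] that \<open>0 \<in> K1\<close> by (simp add: y)
  ultimately have "lam \<in> dual_cone K1" "nu \<in> dual_cone K2"
    by (simp_all add: dual_cone_def)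
  moreover have "lam v* M1 + nu v* M2 = 0"
  proof -
    have "(lam v* M1 + nu v* M2) \<bullet> z = 0" for z
      using kernel[of z] by (simp add: y L_def inner_add_left dot_lmul_matrix)
    from this[of "lam v* M1 + nu v* M2"] show ?thesis
      by simp
  qed
  moreover have "lam \<bullet> c1 + nu \<bullet> c2 < 0"
    using neg by (simp add: y)
  ultimately show thesis
    using that by blast
qed

lemma conic_sets_disjoint_iff:
  fixes K1 :: "(real^'l) set" and K2 :: "(real^'m) set"
    and M1 :: "real^'n^'l" and M2 :: "real^'n^'m"
  assumes "closed K1" "convex K1" "cone K1" "K1 \<noteq> {}"
    and "closed K2" "convex K2" "cone K2" "K2 \<noteq> {}"
    and "bounded (conic_set K1 M1 c1)" "conic_set K1 M1 c1 \<noteq> {}"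
  shows "conic_set K1 M1 c1 \<inter> conic_set K2 M2 c2 = {} \<longleftrightarrow>
    (\<exists>lam\<in>dual_cone K1. \<exists>nu\<in>dual_cone K2. lam v* M1 + nu v* M2 = 0 \<and> lam \<bullet> c1 + nu \<bullet> c2 < 0)"
  using conic_sets_disjoint_imp_certificate[OF assms] certificate_imp_conic_sets_disjoint by metis

lemma dual_certificate_normalize:
  "(\<exists>lam\<in>dual_cone K1. \<exists>nu\<in>dual_cone K2. lam v* M1 + nu v* M2 = 0 \<and> lam \<bullet> c1 + nu \<bullet> c2 < 0) \<longleftrightarrow>
   (\<exists>lam\<in>dual_cone K1. \<exists>nu\<in>dual_cone K2. lam v* M1 + nu v* M2 = 0 \<and> lam \<bullet> c1 + nu \<bullet> c2 < 0
      \<and> norm (lam v* M1) \<le> 1)"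
proof
  assume "\<exists>lam\<in>dual_cone K1. \<exists>nu\<in>dual_cone K2. lam v* M1 + nu v* M2 = 0 \<and> lam \<bullet> c1 + nu \<bullet> c2 < 0"
  then obtain lam nu where "lam \<in> dual_cone K1" "nu \<in> dual_cone K2"
    and kernel: "lam v* M1 + nu v* M2 = 0" and neg: "lam \<bullet> c1 + nu \<bullet> c2 < 0"
    by blast
  define s where "s = 1 / max 1 (norm (lam v* M1))"
  have "s > 0"
    by (simp add: s_def)
  have "s *\<^sub>R lam \<in> dual_cone K1" "s *\<^sub>R nu \<in> dual_cone K2"
    using \<open>lam \<in> dual_cone K1\<close> \<open>nu \<in> dual_cone K2\<close> less_imp_le[OF \<open>s > 0\<close>]
      cone_dual_cone[unfolded cone_def] by blast+
  moreover have "(s *\<^sub>R lam) v* M1 + (s *\<^sub>R nu) v* M2 = 0"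
    using kernel by (simp add: scaleR_vector_matrix_assoc flip: scaleR_right_distrib)
  moreover have "(s *\<^sub>R lam) \<bullet> c1 + (s *\<^sub>R nu) \<bullet> c2 < 0"
    using neg \<open>s > 0\<close> by (simp add: mult_pos_neg flip: distrib_left)
  moreover have "norm ((s *\<^sub>R lam) v* M1) \<le> 1"
    using \<open>s > 0\<close> by (simp add: scaleR_vector_matrix_assoc s_def divide_le_eq_1 max_def)
  ultimately show "\<exists>lam\<in>dual_cone K1. \<exists>nu\<in>dual_cone K2. lam v* M1 + nu v* M2 = 0
      \<and> lam \<bullet> c1 + nu \<bullet> c2 < 0 \<and> norm (lam v* M1) \<le> 1"
    by blast
qed blast

lemma dual_certificate_objective_iff:
  fixes M1 :: "real^'n^'l" and M2 :: "real^'n^'m"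
  assumes "lam v* M1 + nu v* M2 = 0"
  shows "lam \<bullet> (c1 + M1 *v p1) + nu \<bullet> (c2 + M2 *v p2) < 0
    \<longleftrightarrow> - (lam \<bullet> (M1 *v (p1 - p2) + c1)) - nu \<bullet> c2 > 0"
proof -
  have "lam \<bullet> (M1 *v p2) + nu \<bullet> (M2 *v p2) = 0"
    using assms by (simp flip: dot_lmul_matrix inner_add_left)
  then show ?thesis
    by (simp add: matrix_vector_mult_diff_distrib inner_add_right inner_diff_right) arith
qed

lemma body_region_eq_image: "body_region K G g R p = (\<lambda>y. R *v y + p) ` conic_set K G g"
  by (auto simp: body_region_def conic_set_def)

lemma compact_body_region:
  assumes "compact (conic_set K G g)"
  shows "compact (body_region K G g R p)"
  unfolding body_region_eq_image
  by (intro compact_continuous_image assms continuous_intros linear_continuous_on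
      matrix_vector_mul_bounded_linear)

lemma body_region_eq_conic_set:
  assumes "orthogonal_matrix R"
  shows "body_region K G g R p = conic_set K (G ** transpose R) (g + (G ** transpose R) *v p)"
proof -
  have "transpose R *v (R *v y) = y" "R *v (transpose R *v z) = z" for y z
    using assms unfolding orthogonal_matrix_def
    by (metis matrix_vector_mul_assoc matrix_vector_mul_lid)+
  then have preimage: "z = R *v y + p \<longleftrightarrow> y = transpose R *v (z - p)" for y z
    by (metis add_diff_cancel_right' diff_add_cancel)
  have "g - G *v (transpose R *v (z - p)) = (g + (G ** transpose R) *v p) - (G ** transpose R) *v z"
    for z
    unfolding matrix_vector_mul_assoc by (simp add: matrix_vector_mult_diff_distrib)
  moreover have "z \<in> body_region K G g R p \<longleftrightarrow> g - G *v (transpose R *v (z - p)) \<in> K" for z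
    unfolding body_region_def cone_le_def preimage by blast
  ultimately show ?thesis
    unfolding set_eq_iff conic_set_def cone_le_def mem_Collect_eq by metis
qed

theorem proposition1:
  fixes K :: "(real^'l) set"
    and G Gi :: "real^'n^'l"
    and g gi :: "real^'l"
    and R Ri :: "real^'n^'n"
    and p p_i :: "real^'n"
  assumes "closed K" and "convex K" and "cone K" and "interior K \<noteq> {}"
    and "conic_set K G g \<noteq> {}" and "convex (conic_set K G g)" and "compact (conic_set K G g)"
    and "conic_set K Gi gi \<noteq> {}" and "convex (conic_set K Gi gi)" and "compact (conic_set K Gi gi)"
    and "rotation_matrix R" and "rotation_matrix Ri"
  shows "setdist (body_region K G g R p) (body_region K Gi gi Ri p_i) > 0 \<longleftrightarrow>
    (\<exists>lam\<in>dual_cone K. \<exists>nu\<in>dual_cone K.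
        - (lam \<bullet> (G *v (transpose R *v (p - p_i)) + g)) - nu \<bullet> gi > 0
      \<and> norm ((lam v* G) v* transpose R) \<le> 1
      \<and> (lam v* G) v* transpose R = - ((nu v* Gi) v* transpose Ri))"
proof -
  define M where "M = G ** transpose R"
  define Mi where "Mi = Gi ** transpose Ri"
  let ?S = "body_region K G g R p" and ?Si = "body_region K Gi gi Ri p_i"
  have regions: "?S = conic_set K M (g + M *v p)" "?Si = conic_set K Mi (gi + Mi *v p_i)"
    using assms(11,12) by (simp_all add: M_def Mi_def rotation_matrix_def body_region_eq_conic_set)
  have "K \<noteq> {}"
    using assms(4) interior_subset by blast
  have "compact ?S" "compact ?Si"
    using assms(7,10) compact_body_region by blast+
  moreover have "?S \<noteq> {}" "?Si \<noteq> {}"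
    using assms(5,8) by (simp_all add: body_region_eq_image)
  ultimately have "setdist ?S ?Si > 0 \<longleftrightarrow> ?S \<inter> ?Si = {}"
    by (simp add: setdist_gt_0_compact_closed compact_imp_closed)
  also have "\<dots> \<longleftrightarrow> (\<exists>lam\<in>dual_cone K. \<exists>nu\<in>dual_cone K. lam v* M + nu v* Mi = 0
      \<and> lam \<bullet> (g + M *v p) + nu \<bullet> (gi + Mi *v p_i) < 0 \<and> norm (lam v* M) \<le> 1)"
    using \<open>compact ?S\<close> \<open>?S \<noteq> {}\<close> unfolding regions dual_certificate_normalize[symmetric]
    by (intro conic_sets_disjoint_iff assms(1-3) \<open>K \<noteq> {}\<close> compact_imp_bounded)
  also have "\<dots> \<longleftrightarrow> (\<exists>lam\<in>dual_cone K. \<exists>nu\<in>dual_cone K.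
      - (lam \<bullet> (M *v (p - p_i) + g)) - nu \<bullet> gi > 0 \<and> norm (lam v* M) \<le> 1 \<and> lam v* M = - (nu v* Mi))"
    using dual_certificate_objective_iff unfolding eq_neg_iff_add_eq_0 by blast
  finally show ?thesis
    unfolding M_def Mi_def vector_matrix_mul_assoc matrix_vector_mul_assoc .
qed

end
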